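(* Let $m\ge 0$ and $Z\ge 1$ be integers and let $\gamma,\kappa\ge 2$ be integers with $\gamma\kappa>\gamma+\kappa$. Consider pairs $(\mathbf P,\mathbf L)$ with $\mathbf P\in\{0,\ldots,m\}^{\gamma\times\kappa}$ and $\mathbf L\in\mathbb{Z}_Z^{\gamma\times\kappa}$. For $1\le i_1<i_2\le\gamma$ and $1\le j_1<j_2\le\kappa$, call the 4-cycle candidate $(i_1,i_2,j_1,j_2)$ active under $(\mathbf P,\mathbf L)$ if both $$\mathbf P(i_1,j_1)+\mathbf P(i_2,j_2)=\mathbf P(i_1,j_2)+\mathbf P(i_2,j_1)$$ and $$\mathbf L(i_1,j_1)+\mathbf L(i_2,j_2)\equiv\mathbf L(i_1,j_2)+\mathbf L(i_2,j_1)\pmod Z.$$ Let $N$ be the number of pairs $(\mathbf P,\mathbf L)$ under which no 4-cycle candidate is active. Let $\Delta=(2\gamma-3)(2\kappa-3)$, $I=\frac{(\Delta-1)^{\Delta-1}}{\Delta^{\Delta}}$ and $II=\frac{27}{256(\gamma\kappa-\gamma-\kappa)}$. If $$\frac{2m^2+4m+3}{3(m+1)^3Z}\le\max\{I,II\},$$ then $$N\ \ge\ [Z(m+1)]^{\gamma\kappa}\times\begin{cases}\left(1-\frac{2}{\Delta}\right)^{\binom{\gamma}{2}\binom{\kappa}{2}}, & \text{if } I>II,\\[2pt] \left(1-\frac{\gamma\kappa-\gamma-\kappa+1}{4(\gamma\kappa-\gamma-\kappa)}\right)^{\gamma\kappa}, & \text{otherwise.}\end{cases}$$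
   Context: This is the setting of uniform edge spreading (each entry of the partition matrix $\mathbf P$ uniform on $\{0,\ldots,m\}$, $m$ the coupling memory) and uniform lifting (each lifting shift uniform on $\mathbb{Z}_Z$) for a QC-SC-LDPC code from the all-ones $\gamma\times\kappa$ base matrix; the displayed activation conditions are the conditions for a base-graph 4-cycle to survive edge spreading and $Z$-lifting. *)

theory Defs
  imports "HOL-Library.FuncSet" Complex_Main
begin

text \<open>Indices are 0-based: rows i < gamma, columns j < kappa.
  A partition matrix P and a lifting matrix L are functions on
  {..<gamma} \<times> {..<kappa} (extensional, PiE), with entries in {0..m}
  resp. {0..<Z} (representatives of Z_Z).\<close>

definition active4 :: "nat \<Rightarrow> (nat \<times> nat \<Rightarrow> nat) \<Rightarrow> (nat \<times> nat \<Rightarrow> nat)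
    \<Rightarrow> nat \<Rightarrow> nat \<Rightarrow> nat \<Rightarrow> nat \<Rightarrow> bool" where
  "active4 Z P L i1 i2 j1 j2 \<longleftrightarrow>
     P (i1, j1) + P (i2, j2) = P (i1, j2) + P (i2, j1) \<and>
     (L (i1, j1) + L (i2, j2)) mod Z = (L (i1, j2) + L (i2, j1)) mod Z"

definition good_pairs :: "nat \<Rightarrow> nat \<Rightarrow> nat \<Rightarrow> nat
    \<Rightarrow> ((nat \<times> nat \<Rightarrow> nat) \<times> (nat \<times> nat \<Rightarrow> nat)) set" where
  "good_pairs m Z gamma kappa =
     {(P, L). P \<in> ({..<gamma} \<times> {..<kappa}) \<rightarrow>\<^sub>E {0..m} \<and>
              L \<in> ({..<gamma} \<times> {..<kappa}) \<rightarrow>\<^sub>E {..<Z} \<and>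
              (\<forall>i1 i2 j1 j2. i1 < i2 \<and> i2 < gamma \<and> j1 < j2 \<and> j2 < kappa
                 \<longrightarrow> \<not> active4 Z P L i1 i2 j1 j2)}"

end

(*
  Fill the gamma x kappa grid cell by cell in row-major order. When the pair (P, L) is
  chosen at cell (i, j), every earlier cell (i1, j1) with i1 < i and j1 < j closes a
  4-cycle candidate whose other three corners are already fixed, and the two activation
  equations determine the new entry uniquely: the partition entry by the sum equation,
  the lifting entry modulo Z. So at most i j of the Z (m + 1) choices are forbidden, and

    N >= prod_{i < gamma, j < kappa} (Z (m + 1) - i j).

  The threshold hypothesis implies 2 <= 3 Z (m + 1) max{I, II}. If I > II this gives
  2 Z (m + 1) >= Delta + 2 (gamma - 1)(kappa - 1), so by (1 - y)^t (1 + t y) <= 1 each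
  factor is at least Z (m + 1) (1 - 2 / Delta)^(i j), and the exponents add up to
  (gamma choose 2)(kappa choose 2). Otherwise Z (m + 1) >= 4 k for k = gamma kappa - gamma
  - kappa, and as i j <= (gamma - 1)(kappa - 1) = k + 1 each factor is at least
  Z (m + 1) (1 - (k + 1) / (4 k)).
*)

theory Submission
  imports Defs "HOL-Number_Theory.Cong"
begin

lemma card_mult_le_card_if_inj_on_Sigma:
  assumes "finite T" "inj_on f (Sigma S V)" "f ` Sigma S V \<subseteq> T"
    and "\<And>x. x \<in> S \<Longrightarrow> k \<le> card (V x)"
  shows "card S * k \<le> card T"
proof (cases "k = 0")
  case False
  have finite_V: "finite (V x)" and nonempty_V: "V x \<noteq> {}" if "x \<in> S" for x
    using assms(4)[OF that] False by (auto intro: card_ge_0_finite)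
  have finite_Sigma: "finite (Sigma S V)"
    using assms(1-3) finite_subset finite_imageD by blast
  have "S = fst ` Sigma S V"
    using nonempty_V by force
  then have "finite S"
    using finite_Sigma by (metis finite_imageI)
  have "card S * k = (\<Sum>x\<in>S. k)"
    by simp
  also have "\<dots> \<le> (\<Sum>x\<in>S. card (V x))"
    by (rule sum_mono) (rule assms(4))
  also have "\<dots> = card (Sigma S V)"
    using \<open>finite S\<close> finite_V by (simp add: card_SigmaI)
  also have "\<dots> = card (f ` Sigma S V)"
    using assms(2) by (simp add: card_image)
  also have "\<dots> \<le> card T"
    using assms(1,3) by (rule card_mono)
  finally show ?thesis .
qed simp

lemma prod_lessThan_mult_div_mod:
  fixes g k :: nat
  shows "(\<Prod>s<g * k. f (s div k) (s mod k)) = (\<Prod>i<g. \<Prod>j<k. f i j)"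
proof -
  have "(\<Prod>s<g * k. f (s div k) (s mod k)) = (\<Prod>i<g. \<Prod>s\<in>{i * k..<i * k + k}. f (s div k) (s mod k))"
    by (rule prod.nat_group[symmetric])
  also have "\<dots> = (\<Prod>i<g. \<Prod>j<k. f i j)"
  proof (rule prod.cong)
    fix i
    have "(\<Prod>s\<in>{i * k..<i * k + k}. f (s div k) (s mod k))
        = (\<Prod>j\<in>{0..<k}. f ((j + i * k) div k) ((j + i * k) mod k))"
      using prod.shift_bounds_nat_ivl[of "\<lambda>s. f (s div k) (s mod k)" 0 "i * k" k] by (simp add: add.commute)
    also have "\<dots> = (\<Prod>j<k. f i j)"
      by (rule prod.cong) auto
    finally show "(\<Prod>s\<in>{i * k..<i * k + k}. f (s div k) (s mod k)) = (\<Prod>j<k. f i j)" .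
  qed simp
  finally show ?thesis .
qed

lemma sum_lessThan_choose_two: "(\<Sum>i<n. i) = n choose 2"
  using Sum_Ico_nat[of 0 n] by (simp add: choose_two lessThan_atLeast0)

section \<open>Greedy filling of the grid\<close>

definition good_pairs_on :: "nat \<Rightarrow> nat \<Rightarrow> (nat \<times> nat) set
    \<Rightarrow> ((nat \<times> nat \<Rightarrow> nat) \<times> (nat \<times> nat \<Rightarrow> nat)) set" where
  "good_pairs_on m Z C =
     {(P, L). P \<in> C \<rightarrow>\<^sub>E {0..m} \<and> L \<in> C \<rightarrow>\<^sub>E {..<Z} \<and>
              (\<forall>i1 i2 j1 j2. i1 < i2 \<and> j1 < j2 \<and> {(i1, j1), (i1, j2), (i2, j1), (i2, j2)} \<subseteq> C
                 \<longrightarrow> \<not> active4 Z P L i1 i2 j1 j2)}"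

definition admissible_entries :: "nat \<Rightarrow> nat \<Rightarrow> (nat \<times> nat \<Rightarrow> nat) \<Rightarrow> (nat \<times> nat \<Rightarrow> nat)
    \<Rightarrow> nat \<Rightarrow> nat \<Rightarrow> (nat \<times> nat) set" where
  "admissible_entries m Z P L i j =
     {(a, b) \<in> {0..m} \<times> {..<Z}.
        \<forall>i1<i. \<forall>j1<j. \<not> active4 Z (P((i, j) := a)) (L((i, j) := b)) i1 i j1 j}"

lemma good_pairs_on_grid:
  "good_pairs_on m Z ({..<gamma} \<times> {..<kappa}) = good_pairs m Z gamma kappa"
  unfolding good_pairs_on_def good_pairs_def by (intro Collect_cong prod.case_cong) auto

lemma finite_good_pairs_on:
  assumes "finite C"
  shows "finite (good_pairs_on m Z C)"
proof (rule finite_subset)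
  show "good_pairs_on m Z C \<subseteq> (C \<rightarrow>\<^sub>E {0..m}) \<times> (C \<rightarrow>\<^sub>E {..<Z})"
    by (auto simp: good_pairs_on_def)
  show "finite ((C \<rightarrow>\<^sub>E {0..m}) \<times> (C \<rightarrow>\<^sub>E {..<Z}))"
    using assms by (simp add: finite_PiE)
qed

lemma active4_update_corner_unique:
  assumes "i1 \<noteq> i" "j1 \<noteq> j" "b < Z" "b' < Z"
    and "active4 Z (P((i, j) := a)) (L((i, j) := b)) i1 i j1 j"
    and "active4 Z (P((i, j) := a')) (L((i, j) := b')) i1 i j1 j"
  shows "a = a' \<and> b = b'"
proof -
  have "P (i1, j1) + a = P (i1, j1) + a'"
    and "[L (i1, j1) + b = L (i1, j1) + b'] (mod Z)"
    using assms by (auto simp: active4_def cong_def)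
  then have "a = a'" and "[b = b'] (mod Z)"
    by (simp_all only: add_left_cancel cong_add_lcancel_nat)
  then show ?thesis
    using assms(3,4) by (simp add: cong_def)
qed

lemma card_admissible_entries_ge:
  "(m + 1) * Z - i * j \<le> card (admissible_entries m Z P L i j)"
proof -
  define E where "E = {0..m} \<times> {..<Z}"
  define blocked where "blocked = (\<lambda>(i1, j1). {(a, b) \<in> E.
     active4 Z (P((i, j) := a)) (L((i, j) := b)) i1 i j1 j})"
  define B where "B = \<Union> (blocked ` ({..<i} \<times> {..<j}))"
  have card_blocked: "card (blocked (i1, j1)) \<le> 1" if "i1 < i" "j1 < j" for i1 j1
  proof -
    have "finite (blocked (i1, j1))"
      by (rule finite_subset[of _ E]) (auto simp: blocked_def E_def)
    moreover have "x = y" if "x \<in> blocked (i1, j1)" "y \<in> blocked (i1, j1)" for x y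
      using that \<open>i1 < i\<close> \<open>j1 < j\<close> active4_update_corner_unique[of i1 i j1 j]
      by (auto simp: blocked_def E_def)
    ultimately show ?thesis
      by (simp add: card_le_Suc0_iff_eq)
  qed
  have "card B \<le> (\<Sum>c\<in>{..<i} \<times> {..<j}. card (blocked c))"
    unfolding B_def by (rule card_UN_le) simp
  also have "\<dots> \<le> (\<Sum>c\<in>{..<i} \<times> {..<j}. 1)"
    by (rule sum_mono) (use card_blocked in auto)
  also have "\<dots> = i * j"
    by (simp add: card_cartesian_product)
  finally have "card E - i * j \<le> card E - card B"
    by (rule diff_le_mono2)
  also have "\<dots> \<le> card (E - B)"
  proof (rule diff_card_le_card_Diff)
    show "finite B"
      by (rule finite_subset[of _ E]) (auto simp: B_def blocked_def E_def)
  qed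
  also have "E - B = admissible_entries m Z P L i j"
    by (auto simp: admissible_entries_def B_def blocked_def E_def)
  finally show ?thesis
    by (simp add: E_def card_cartesian_product)
qed

lemma good_pairs_on_insert_update:
  assumes "(P, L) \<in> good_pairs_on m Z C" "(a, b) \<in> admissible_entries m Z P L i j"
    and before: "\<And>i' j'. (i', j') \<in> C \<Longrightarrow> i' < i \<or> (i' = i \<and> j' < j)"
  shows "(P((i, j) := a), L((i, j) := b)) \<in> good_pairs_on m Z (insert (i, j) C)"
proof -
  have P: "P \<in> C \<rightarrow>\<^sub>E {0..m}" and L: "L \<in> C \<rightarrow>\<^sub>E {..<Z}"
    and old: "\<And>i1 i2 j1 j2. i1 < i2 \<Longrightarrow> j1 < j2 \<Longrightarrow>
       {(i1, j1), (i1, j2), (i2, j1), (i2, j2)} \<subseteq> C \<Longrightarrow> \<not> active4 Z P L i1 i2 j1 j2"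
    using assms(1) by (auto simp: good_pairs_on_def)
  have ab: "a \<in> {0..m}" "b \<in> {..<Z}"
    and new: "\<And>i1 j1. i1 < i \<Longrightarrow> j1 < j \<Longrightarrow>
       \<not> active4 Z (P((i, j) := a)) (L((i, j) := b)) i1 i j1 j"
    using assms(2) by (auto simp: admissible_entries_def)
  have no_active: "\<not> active4 Z (P((i, j) := a)) (L((i, j) := b)) i1 i2 j1 j2"
    if "i1 < i2" "j1 < j2" "{(i1, j1), (i1, j2), (i2, j1), (i2, j2)} \<subseteq> insert (i, j) C"
    for i1 i2 j1 j2
  proof (cases "(i2, j2) = (i, j)")
    case True
    then show ?thesis
      using new that by auto
  next
    case False
    then have "i2 < i \<or> (i2 = i \<and> j2 < j)"
      using that before by blast
    then have "{(i1, j1), (i1, j2), (i2, j1), (i2, j2)} \<subseteq> C - {(i, j)}"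
      using that by auto
    then show ?thesis
      using old[OF that(1,2)] by (auto simp: active4_def)
  qed
  show ?thesis
    unfolding good_pairs_on_def mem_Collect_eq prod.case
  proof (intro conjI allI impI)
    show "P((i, j) := a) \<in> insert (i, j) C \<rightarrow>\<^sub>E {0..m}"
      using ab(1) P by (rule PiE_fun_upd)
    show "L((i, j) := b) \<in> insert (i, j) C \<rightarrow>\<^sub>E {..<Z}"
      using ab(2) L by (rule PiE_fun_upd)
  next
    fix i1 i2 j1 j2
    assume "i1 < i2 \<and> j1 < j2 \<and> {(i1, j1), (i1, j2), (i2, j1), (i2, j2)} \<subseteq> insert (i, j) C"
    then show "\<not> active4 Z (P((i, j) := a)) (L((i, j) := b)) i1 i2 j1 j2"
      using no_active[of i1 i2 j1 j2] by blast
  qed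
qed

lemma card_good_pairs_on_insert:
  assumes "finite C"
    and before: "\<And>i' j'. (i', j') \<in> C \<Longrightarrow> i' < i \<or> (i' = i \<and> j' < j)"
  shows "card (good_pairs_on m Z C) * ((m + 1) * Z - i * j)
           \<le> card (good_pairs_on m Z (insert (i, j) C))"
proof (rule card_mult_le_card_if_inj_on_Sigma)
  let ?V = "\<lambda>(P, L). admissible_entries m Z P L i j"
  let ?ext = "\<lambda>((P, L), (a, b)). (P((i, j) := a), L((i, j) := b))"
  show "finite (good_pairs_on m Z (insert (i, j) C))"
    using assms(1) by (simp add: finite_good_pairs_on)
  show "(m + 1) * Z - i * j \<le> card (?V x)" for x
    by (cases x) (simp only: prod.case card_admissible_entries_ge)
  show "?ext ` Sigma (good_pairs_on m Z C) ?V \<subseteq> good_pairs_on m Z (insert (i, j) C)"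
    using good_pairs_on_insert_update[OF _ _ before] by auto
  have "(i, j) \<notin> C"
    using before by blast
  show "inj_on ?ext (Sigma (good_pairs_on m Z C) ?V)"
  proof (rule inj_onI)
    fix x y
    assume mem: "x \<in> Sigma (good_pairs_on m Z C) ?V" "y \<in> Sigma (good_pairs_on m Z C) ?V"
      and eq: "?ext x = ?ext y"
    obtain P L a b where x: "x = ((P, L), a, b)"
      by (metis prod.collapse)
    obtain P' L' a' b' where y: "y = ((P', L'), a', b')"
      by (metis prod.collapse)
    have P: "(a, P) \<in> {0..m} \<times> (C \<rightarrow>\<^sub>E {0..m})" "(a', P') \<in> {0..m} \<times> (C \<rightarrow>\<^sub>E {0..m})"
      and L: "(b, L) \<in> {..<Z} \<times> (C \<rightarrow>\<^sub>E {..<Z})" "(b', L') \<in> {..<Z} \<times> (C \<rightarrow>\<^sub>E {..<Z})"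
      and upd: "P((i, j) := a) = P'((i, j) := a')" "L((i, j) := b) = L'((i, j) := b')"
      using mem eq by (auto simp: x y good_pairs_on_def admissible_entries_def)
    have "(a, P) = (a', P')"
      using inj_onD[OF inj_combinator[OF \<open>(i, j) \<notin> C\<close>] _ P] upd(1) by simp
    moreover have "(b, L) = (b', L')"
      using inj_onD[OF inj_combinator[OF \<open>(i, j) \<notin> C\<close>] _ L] upd(2) by simp
    ultimately show "x = y"
      by (simp add: x y)
  qed
qed

definition row_major_prefix :: "nat \<Rightarrow> nat \<Rightarrow> (nat \<times> nat) set" where
  "row_major_prefix kappa r = {(i, j). j < kappa \<and> i * kappa + j < r}"

lemma row_major_prefix_subset: "row_major_prefix kappa r \<subseteq> {..<r} \<times> {..<kappa}"
proof
  fix x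
  assume "x \<in> row_major_prefix kappa r"
  then obtain i j where x: "x = (i, j)" and "j < kappa" "i * kappa + j < r"
    by (auto simp: row_major_prefix_def)
  moreover from \<open>j < kappa\<close> have "i \<le> i * kappa"
    by simp
  ultimately have "i < r"
    by linarith
  with x \<open>j < kappa\<close> show "x \<in> {..<r} \<times> {..<kappa}"
    by simp
qed

lemma finite_row_major_prefix: "finite (row_major_prefix kappa r)"
  using row_major_prefix_subset by (rule finite_subset) simp

lemma row_major_prefix_Suc:
  assumes "0 < kappa"
  shows "row_major_prefix kappa (Suc r) = insert (r div kappa, r mod kappa) (row_major_prefix kappa r)"
  using assms by (auto simp: row_major_prefix_def less_Suc_eq)

lemma row_major_prefix_before:
  assumes "(i, j) \<in> row_major_prefix kappa r"
  shows "i < r div kappa \<or> (i = r div kappa \<and> j < r mod kappa)"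
proof -
  have "j < kappa" and lt: "i * kappa + j < r"
    using assms by (auto simp: row_major_prefix_def)
  then have "i = (i * kappa + j) div kappa"
    by simp
  with lt have "i \<le> r div kappa"
    by (metis div_le_mono less_imp_le)
  moreover have "j < r mod kappa" if "i = r div kappa"
    using lt unfolding that by (metis add_less_cancel_left div_mult_mod_eq)
  ultimately show ?thesis
    by linarith
qed

lemma row_major_prefix_full:
  "row_major_prefix kappa (gamma * kappa) = {..<gamma} \<times> {..<kappa}"
proof -
  have iff: "j < kappa \<and> i * kappa + j < gamma * kappa \<longleftrightarrow> i < gamma \<and> j < kappa" for i j
  proof
    assume "j < kappa \<and> i * kappa + j < gamma * kappa"
    then have "j < kappa" "i * kappa < gamma * kappa"
      by linarith+
    then show "i < gamma \<and> j < kappa"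
      by simp
  next
    assume "i < gamma \<and> j < kappa"
    moreover from this have "Suc i * kappa \<le> gamma * kappa"
      by (intro mult_le_mono1) simp
    ultimately show "j < kappa \<and> i * kappa + j < gamma * kappa"
      by simp
  qed
  show ?thesis
    unfolding row_major_prefix_def set_eq_iff by (simp add: iff)
qed

lemma card_good_pairs_on_row_major_prefix:
  assumes "0 < kappa"
  shows "(\<Prod>s<r. (m + 1) * Z - (s div kappa) * (s mod kappa))
           \<le> card (good_pairs_on m Z (row_major_prefix kappa r))"
proof (induction r)
  case 0
  have "good_pairs_on m Z (row_major_prefix kappa 0) = {(\<lambda>_. undefined, \<lambda>_. undefined)}"
    by (auto simp: good_pairs_on_def row_major_prefix_def)
  then show ?case
    by simp
next
  case (Suc r)
  have "(\<Prod>s<Suc r. (m + 1) * Z - (s div kappa) * (s mod kappa))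
      \<le> card (good_pairs_on m Z (row_major_prefix kappa r))
          * ((m + 1) * Z - (r div kappa) * (r mod kappa))"
    using Suc.IH by simp
  also have "\<dots> \<le> card (good_pairs_on m Z (row_major_prefix kappa (Suc r)))"
    unfolding row_major_prefix_Suc[OF assms]
    using finite_row_major_prefix row_major_prefix_before by (rule card_good_pairs_on_insert)
  finally show ?case .
qed

theorem card_good_pairs_ge_prod:
  "(\<Prod>i<gamma. \<Prod>j<kappa. (m + 1) * Z - i * j) \<le> card (good_pairs m Z gamma kappa)"
proof (cases "kappa = 0")
  case True
  then show ?thesis
    by (simp add: good_pairs_def)
next
  case False
  have "(\<Prod>i<gamma. \<Prod>j<kappa. (m + 1) * Z - i * j)
      = (\<Prod>s<gamma * kappa. (m + 1) * Z - (s div kappa) * (s mod kappa))"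
    by (rule prod_lessThan_mult_div_mod[symmetric])
  also have "\<dots> \<le> card (good_pairs_on m Z (row_major_prefix kappa (gamma * kappa)))"
    using False by (intro card_good_pairs_on_row_major_prefix) simp
  finally show ?thesis
    by (simp only: row_major_prefix_full good_pairs_on_grid)
qed

section \<open>From the product to the two closed forms\<close>

lemma one_minus_power_mult_le_one:
  fixes y :: real
  assumes "0 \<le> y" "y \<le> 1"
  shows "(1 - y) ^ n * (1 + real n * y) \<le> 1"
proof -
  have "(1 - y) ^ n \<le> exp (- y) ^ n"
    using assms exp_ge_add_one_self[of "- y"] by (intro power_mono) auto
  also have "\<dots> = exp (- (real n * y))"
    by (simp add: exp_of_nat_mult[symmetric])
  finally have "(1 - y) ^ n * (1 + real n * y) \<le> exp (- (real n * y)) * exp (real n * y)"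
    using assms by (intro mult_mono exp_ge_add_one_self) auto
  also have "\<dots> = 1"
    by (simp flip: exp_add)
  finally show ?thesis .
qed

lemma mult_one_minus_power_le:
  fixes A y :: real
  assumes "0 \<le> y" "y \<le> 1" "1 + real t * y \<le> A * y"
  shows "A * (1 - y) ^ t \<le> A - real t"
proof -
  have "0 < (A - real t) * y"
    using assms(3) by (simp add: algebra_simps)
  then have "0 \<le> A - real t"
    using assms(1) by (simp add: zero_less_mult_iff)
  have "A \<le> (A - real t) * (1 + real t * y)"
    using assms(3) mult_left_mono[OF assms(3), of "real t"] by (simp add: algebra_simps)
  then have "A * (1 - y) ^ t \<le> ((A - real t) * (1 + real t * y)) * (1 - y) ^ t"
    by (rule mult_right_mono) (use assms(2) in simp)
  also have "\<dots> = (A - real t) * ((1 - y) ^ t * (1 + real t * y))"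
    by (simp only: mult_ac)
  also have "\<dots> \<le> A - real t"
    using one_minus_power_mult_le_one[OF assms(1,2)] \<open>0 \<le> A - real t\<close>
    by (simp add: mult_left_le)
  finally show ?thesis .
qed

lemma pred_power_div_power_le:
  fixes D :: nat
  assumes "1 \<le> D"
  shows "(real D - 1) ^ (D - 1) / real D ^ D \<le> 1 / (2 * real D - 1)"
proof -
  define y where "y = 1 / real D"
  have y: "0 \<le> y" "y \<le> 1" and one_minus_y: "1 - y = (real D - 1) / real D"
    using assms by (auto simp: y_def field_simps)
  have "real D ^ D = real D * real D ^ (D - 1)"
    using assms by (cases D) simp_all
  then have "(real D - 1) ^ (D - 1) / real D ^ D = (1 - y) ^ (D - 1) / real D"
    by (simp add: one_minus_y power_divide)
  moreover have "(1 - y) ^ (D - 1) * ((2 * real D - 1) / real D) \<le> 1"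
    using one_minus_power_mult_le_one[OF y, of "D - 1"] assms
    by (simp add: y_def of_nat_diff field_simps)
  then have "(1 - y) ^ (D - 1) * (2 * real D - 1) \<le> real D"
    using assms by (simp add: field_simps)
  then have "(1 - y) ^ (D - 1) / real D \<le> 1 / (2 * real D - 1)"
    using assms by (simp add: divide_simps)
  ultimately show ?thesis
    by simp
qed

lemma card_good_pairs_ge_real_prod:
  fixes w :: "nat \<Rightarrow> nat \<Rightarrow> real"
  assumes "\<And>i j. i < gamma \<Longrightarrow> j < kappa \<Longrightarrow>
             0 \<le> w i j \<and> w i j \<le> real Z * (real m + 1) - real (i * j)"
  shows "(\<Prod>i<gamma. \<Prod>j<kappa. w i j) \<le> real (card (good_pairs m Z gamma kappa))"
proof -
  have "real Z * (real m + 1) - real (i * j) \<le> real ((m + 1) * Z - i * j)" for i j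
  proof -
    have "real Z * (real m + 1) = real ((m + 1) * Z)"
      by (simp add: algebra_simps)
    moreover have "real a - real b \<le> real (a - b)" for a b :: nat
      by (cases "b \<le> a") (simp_all add: of_nat_diff)
    ultimately show ?thesis
      by metis
  qed
  with assms have "0 \<le> w i j \<and> w i j \<le> real ((m + 1) * Z - i * j)"
    if "i < gamma" "j < kappa" for i j
    using that by (meson order_trans)
  then have "(\<Prod>i<gamma. \<Prod>j<kappa. w i j) \<le> (\<Prod>i<gamma. \<Prod>j<kappa. real ((m + 1) * Z - i * j))"
    by (intro prod_mono conjI prod_nonneg) auto
  also have "\<dots> \<le> real (card (good_pairs m Z gamma kappa))"
    using card_good_pairs_ge_prod[where gamma = gamma and kappa = kappa] by (simp only: of_nat_prod[symmetric] of_nat_le_iff)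
  finally show ?thesis .
qed

lemma card_good_pairs_ge_geometric:
  fixes y :: real
  assumes "0 \<le> y" "y \<le> 1"
    and "1 + real ((gamma - 1) * (kappa - 1)) * y \<le> real Z * (real m + 1) * y"
  shows "(real Z * (real m + 1)) ^ (gamma * kappa) * (1 - y) ^ ((gamma choose 2) * (kappa choose 2))
           \<le> real (card (good_pairs m Z gamma kappa))"
proof -
  define A where "A = real Z * (real m + 1)"
  have "A * (1 - y) ^ (i * j) \<le> A - real (i * j)" if "i < gamma" "j < kappa" for i j
  proof (rule mult_one_minus_power_le[OF assms(1,2)])
    have "i * j \<le> (gamma - 1) * (kappa - 1)"
      using that by (intro mult_le_mono) auto
    then have "real (i * j) * y \<le> real ((gamma - 1) * (kappa - 1)) * y"
      using assms(1) by (intro mult_right_mono) (simp_all only: of_nat_le_iff)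
    with assms(3) show "1 + real (i * j) * y \<le> A * y"
      unfolding A_def by linarith
  qed
  then have "(\<Prod>i<gamma. \<Prod>j<kappa. A * (1 - y) ^ (i * j)) \<le> real (card (good_pairs m Z gamma kappa))"
    using assms(2) by (intro card_good_pairs_ge_real_prod) (simp add: A_def)
  moreover have "(\<Prod>i<gamma. \<Prod>j<kappa. A * (1 - y) ^ (i * j))
      = (A ^ kappa) ^ gamma * (1 - y) ^ (\<Sum>i<gamma. \<Sum>j<kappa. i * j)"
    by (simp add: prod.distrib power_sum)
  moreover have "(A ^ kappa) ^ gamma = A ^ (gamma * kappa)"
    by (metis mult.commute power_mult)
  moreover have "(\<Sum>i<gamma. \<Sum>j<kappa. i * j) = (gamma choose 2) * (kappa choose 2)"
    by (simp add: sum_product[symmetric] sum_lessThan_choose_two)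
  ultimately show ?thesis
    by (simp add: A_def)
qed

lemma card_good_pairs_ge_uniform:
  fixes c :: real
  assumes "0 \<le> c"
    and "real Z * (real m + 1) * c \<le> real Z * (real m + 1) - real ((gamma - 1) * (kappa - 1))"
  shows "(real Z * (real m + 1)) ^ (gamma * kappa) * c ^ (gamma * kappa)
           \<le> real (card (good_pairs m Z gamma kappa))"
proof -
  define A where "A = real Z * (real m + 1)"
  have "A * c \<le> A - real (i * j)" if "i < gamma" "j < kappa" for i j
  proof -
    have "i * j \<le> (gamma - 1) * (kappa - 1)"
      using that by (intro mult_le_mono) auto
    then have "real (i * j) \<le> real ((gamma - 1) * (kappa - 1))"
      by (simp only: of_nat_le_iff)
    with assms(2) show ?thesis
      unfolding A_def by linarith
  qed
  then have "(\<Prod>i<gamma. \<Prod>j<kappa. A * c) \<le> real (card (good_pairs m Z gamma kappa))"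
    using assms(1) by (intro card_good_pairs_ge_real_prod) (simp add: A_def)
  moreover have "(\<Prod>i<gamma. \<Prod>j<kappa. A * c) = A ^ (gamma * kappa) * c ^ (gamma * kappa)"
    by (simp add: power_mult_distrib mult.commute flip: power_mult)
  ultimately show ?thesis
    by (simp add: A_def)
qed

section \<open>The threshold hypothesis\<close>

lemma threshold_ge:
  assumes "0 < Z"
  shows "2 / (3 * (real Z * (real m + 1)))
           \<le> (2 * real m ^ 2 + 4 * real m + 3) / (3 * (real m + 1) ^ 3 * real Z)"
proof -
  have "2 / (3 * (real Z * (real m + 1)))
      = 2 * (real m + 1) ^ 2 / (3 * (real Z * (real m + 1)) * (real m + 1) ^ 2)"
    by simp
  also have "\<dots> = 2 * (real m + 1) ^ 2 / (3 * (real m + 1) ^ 3 * real Z)"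
    by (simp add: power2_eq_square power3_eq_cube mult_ac)
  also have "\<dots> \<le> (2 * real m ^ 2 + 4 * real m + 3) / (3 * (real m + 1) ^ 3 * real Z)"
    using assms by (intro divide_right_mono) (simp_all add: power2_eq_square algebra_simps)
  finally show ?thesis .
qed

lemma threshold_I_regime:
  fixes gamma kappa :: nat and A :: real
  defines "D \<equiv> (2 * gamma - 3) * (2 * kappa - 3)"
  assumes "2 \<le> gamma" "2 \<le> kappa" "gamma + kappa < gamma * kappa"
    and "2 \<le> 3 * A * ((real D - 1) ^ (D - 1) / real D ^ D)"
  shows "2 / real D \<le> 1"
    and "1 + real ((gamma - 1) * (kappa - 1)) * (2 / real D) \<le> A * (2 / real D)"
proof -
  obtain a b where ab: "gamma = a + 2" "kappa = b + 2"
    using assms(2,3) by (metis add.commute le_Suc_ex)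
  define T where "T = (gamma - 1) * (kappa - 1)"
  define I where "I = (real D - 1) ^ (D - 1) / real D ^ D"
  have D: "D = (2 * a + 1) * (2 * b + 1)" and T: "T = (a + 1) * (b + 1)"
    by (simp_all add: D_def T_def ab)
  have "0 < a * b + a + b"
    using assms(4) by (simp add: ab algebra_simps)
  then have "3 \<le> D"
    unfolding D by (cases a; cases b) (auto simp: algebra_simps)
  then show "2 / real D \<le> 1"
    by simp
  have hyp: "2 \<le> 3 * A * I"
    using assms(5) by (simp only: I_def)
  have key: "real D + 2 * real T \<le> 2 * A"
  proof (cases "(a = 0 \<and> b = 1) \<or> (a = 1 \<and> b = 0)")
    case True
    \<comment> \<open>the 2 x 3 and 3 x 2 grids, where the estimate of the other case is too weak\<close>
    then have "D = 3" "T = 2"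
      unfolding D T by auto
    moreover from \<open>D = 3\<close> have "I = 4 / 27"
      by (simp add: I_def)
    with hyp have "2 \<le> A * (4 / 9)"
      by simp
    ultimately show ?thesis
      by simp
  next
    case False
    with \<open>0 < a * b + a + b\<close> have "5 \<le> 14 * a * b + 4 * a + 4 * b"
      by (cases a; cases b) (auto simp: algebra_simps)
    then have "6 * T + 4 \<le> 5 * D"
      unfolding D T by (simp add: algebra_simps)
    then have "real (6 * T + 4) \<le> real (5 * D)"
      by (simp only: of_nat_le_iff)
    then have "6 * real T + 4 \<le> 5 * real D"
      by simp
    have "0 \<le> I"
      using \<open>3 \<le> D\<close> by (simp add: I_def)
    have "0 < A"
    proof (rule ccontr)
      assume "\<not> 0 < A"
      then have "3 * A * I \<le> 0"
        using \<open>0 \<le> I\<close> by (simp add: mult_le_0_iff)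
      with hyp show False
        by linarith
    qed
    then have "3 * A * I \<le> 3 * A * (1 / (2 * real D - 1))"
      using \<open>3 \<le> D\<close> pred_power_div_power_le[of D] by (intro mult_left_mono) (simp_all add: I_def)
    with hyp have "2 \<le> 3 * A / (2 * real D - 1)"
      by simp
    with \<open>3 \<le> D\<close> have "4 * real D \<le> 3 * A + 2"
      by (simp add: le_divide_eq)
    with \<open>6 * real T + 4 \<le> 5 * real D\<close> show ?thesis
      by linarith
  qed
  have "1 + real T * (2 / real D) = (real D + 2 * real T) / real D"
    using \<open>3 \<le> D\<close> by (simp add: field_simps)
  also have "\<dots> \<le> A * 2 / real D"
    using key by (intro divide_right_mono) simp_all
  finally show "1 + real ((gamma - 1) * (kappa - 1)) * (2 / real D) \<le> A * (2 / real D)"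
    by (simp add: T_def)
qed

lemma threshold_II_regime:
  fixes gamma kappa :: nat and A :: real
  defines "k \<equiv> gamma * kappa - gamma - kappa"
  assumes "gamma + kappa < gamma * kappa" "2 \<le> 3 * A * (27 / (256 * real k))"
  shows "0 \<le> 1 - real (k + 1) / (4 * real k)"
    and "A * (1 - real (k + 1) / (4 * real k)) \<le> A - real ((gamma - 1) * (kappa - 1))"
proof -
  have "1 \<le> k"
    using assms(2) by (simp add: k_def)
  then show "0 \<le> 1 - real (k + 1) / (4 * real k)"
    by (simp add: divide_simps)
  from assms(3) \<open>1 \<le> k\<close> have "4 * real k \<le> A"
    by (simp add: field_simps)
  then have "real (k + 1) * (4 * real k) \<le> real (k + 1) * A"
    by (rule mult_left_mono) simp
  then have "A * (1 - real (k + 1) / (4 * real k)) \<le> A - real (k + 1)"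
    using \<open>1 \<le> k\<close> by (simp add: field_simps)
  moreover have "(gamma - 1) * (kappa - 1) = k + 1"
    using assms(2) unfolding k_def by (cases gamma; cases kappa) (auto simp: algebra_simps)
  ultimately show "A * (1 - real (k + 1) / (4 * real k)) \<le> A - real ((gamma - 1) * (kappa - 1))"
    by simp
qed

theorem corollary1:
  fixes m Z gamma kappa :: nat
  assumes "Z \<ge> 1" and "gamma \<ge> 2" and "kappa \<ge> 2"
    and "gamma * kappa > gamma + kappa"
  defines "\<Delta> \<equiv> real ((2 * gamma - 3) * (2 * kappa - 3))"
  defines "I \<equiv> (\<Delta> - 1) ^ ((2 * gamma - 3) * (2 * kappa - 3) - 1) / \<Delta> ^ ((2 * gamma - 3) * (2 * kappa - 3))"
  defines "II \<equiv> 27 / (256 * real (gamma * kappa - gamma - kappa))"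
  assumes "(2 * real m ^ 2 + 4 * real m + 3) / (3 * (real m + 1) ^ 3 * real Z) \<le> max I II"
  shows "real (card (good_pairs m Z gamma kappa)) \<ge>
           (real Z * (real m + 1)) ^ (gamma * kappa) *
           (if I > II
            then (1 - 2 / \<Delta>) ^ ((gamma choose 2) * (kappa choose 2))
            else (1 - real (gamma * kappa - gamma - kappa + 1)
                        / (4 * real (gamma * kappa - gamma - kappa))) ^ (gamma * kappa))"
proof -
  define A where "A = real Z * (real m + 1)"
  have "0 < A"
    using assms(1) by (simp add: A_def)
  moreover have "2 / (3 * A) \<le> max I II"
    using threshold_ge[of Z m] assms(1,8) unfolding A_def by linarith
  ultimately have threshold: "2 \<le> 3 * A * max I II"
    by (simp add: divide_le_eq mult.commute)
  show ?thesis
  proof (cases "I > II")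
    case True
    with threshold have "2 \<le> 3 * A * I"
      by simp
    note regime = threshold_I_regime[OF assms(2-4) this[unfolded I_def \<Delta>_def]]
    show ?thesis
      using card_good_pairs_ge_geometric[OF _ regime[folded \<Delta>_def, unfolded A_def]] True
      by (simp add: \<Delta>_def)
  next
    case False
    with threshold have "2 \<le> 3 * A * II"
      by simp
    note regime = threshold_II_regime[OF assms(4) this[unfolded II_def]]
    show ?thesis
      using card_good_pairs_ge_uniform[OF regime[unfolded A_def]] False
      by simp
  qed
qed

end
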